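(* If $f:\mathbb{N}^d\to\mathbb{N}$ is obliviously-computable, then for every $i\in\{1,\ldots,d\}$ and $j\in\mathbb{N}$ the fixed-input restriction $f_{[\vec{x}(i)\to j]}:\mathbb{N}^d\to\mathbb{N}$ is obliviously-computable.
   Context: A chemical reaction network (CRN) is a pair $(\mathcal{S},\mathcal{R})$ of a finite set of species and a finite set of reactions $(\vec{R},\vec{P})\in\mathbb{N}^{\mathcal{S}}\times\mathbb{N}^{\mathcal{S}}$. A configuration is $\vec{C}\in\mathbb{N}^{\mathcal{S}}$; a reaction is applicable if $\vec{R}\le\vec{C}$ and yields $\vec{C}-\vec{R}+\vec{P}$; reachability is via finite sequences of applicable reactions. To compute $f:\mathbb{N}^d\to\mathbb{N}$ the CRN has input species $X_1,\ldots,X_d$, output species $Y$, leader species $L$; the initial configuration $\vec{I}_{\vec{x}}$ has $\vec{x}(i)$ copies of $X_i$, one $L$, nothing else. $\vec{C}$ is stable if all configurations reachable from it have the same count of $Y$. The CRN stably computes $f$ if for every $\vec{x}$ and every $\vec{C}$ reachable from $\vec{I}_{\vec{x}}$ some stable $\vec{O}$ reachable from $\vec{C}$ has $\vec{O}(Y)=f(\vec{x})$. The CRN is output-oblivious if $Y$ is never a reactant; $f$ is obliviously-computable if stably computed by an output-oblivious CRN. The fixed-input restriction is $f_{[\vec{x}(i)\to j]}(\vec{x})=f(\vec{x}(1),\ldots,\vec{x}(i-1),j,\vec{x}(i+1),\ldots,\vec{x}(d))$ for all $\vec{x}\in\mathbb{N}^d$. *)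

theory Defs
  imports Main
begin

(* Species are encoded as natural numbers; configurations are functions
   species => nat (vectors in N^S); a reaction is a pair (reactants, products). *)
type_synonym species = nat
type_synonym config = "species \<Rightarrow> nat"
type_synonym reaction = "config \<times> config"

record crn =
  species :: "species set"
  reactions :: "reaction set"
  inputs :: "species list"     (* X_1, ..., X_d  (list index i-1 for X_i) *)
  out_species :: species
  leader_sp :: species

definition well_formed :: "crn \<Rightarrow> nat \<Rightarrow> bool" where
  "well_formed C d \<longleftrightarrow>
     finite (species C) \<and> finite (reactions C) \<and>
     (\<forall>r\<in>reactions C. \<forall>s. s \<notin> species C \<longrightarrow> fst r s = 0 \<and> snd r s = 0) \<and>
     length (inputs C) = d \<and> distinct (inputs C) \<and> set (inputs C) \<subseteq> species C \<and>
     out_species C \<in> species C \<and> leader_sp C \<in> species C \<and>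
     leader_sp C \<notin> set (inputs C) \<and> out_species C \<notin> set (inputs C) \<and> out_species C \<noteq> leader_sp C"

definition step :: "crn \<Rightarrow> config \<Rightarrow> config \<Rightarrow> bool" where
  "step C A B \<longleftrightarrow> (\<exists>r\<in>reactions C. fst r \<le> A \<and> B = (\<lambda>s. A s - fst r s + snd r s))"

definition reaches :: "crn \<Rightarrow> config \<Rightarrow> config \<Rightarrow> bool" where
  "reaches C = (step C)\<^sup>*\<^sup>*"

definition init_config :: "crn \<Rightarrow> nat list \<Rightarrow> config" where
  "init_config C x = (\<lambda>s. (\<Sum>i<length x. if inputs C ! i = s then x ! i else 0)
                          + (if s = leader_sp C then 1 else 0))"

definition stable :: "crn \<Rightarrow> config \<Rightarrow> bool" where
  "stable C A \<longleftrightarrow> (\<forall>B. reaches C A B \<longrightarrow> B (out_species C) = A (out_species C))"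

(* f : N^d -> N is represented as a function on lists; only lists of length d matter *)
definition stably_computes :: "crn \<Rightarrow> nat \<Rightarrow> (nat list \<Rightarrow> nat) \<Rightarrow> bool" where
  "stably_computes C d f \<longleftrightarrow> well_formed C d \<and>
     (\<forall>x. length x = d \<longrightarrow>
        (\<forall>A. reaches C (init_config C x) A \<longrightarrow>
           (\<exists>Z. reaches C A Z \<and> stable C Z \<and> Z (out_species C) = f x)))"

definition output_oblivious :: "crn \<Rightarrow> bool" where
  "output_oblivious C \<longleftrightarrow> (\<forall>r\<in>reactions C. fst r (out_species C) = 0)"

definition obliviously_computable :: "nat \<Rightarrow> (nat list \<Rightarrow> nat) \<Rightarrow> bool" where
  "obliviously_computable d f \<longleftrightarrow> (\<exists>C. stably_computes C d f \<and> output_oblivious C)"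

definition fix_input :: "(nat list \<Rightarrow> nat) \<Rightarrow> nat \<Rightarrow> nat \<Rightarrow> nat list \<Rightarrow> nat" where
  "fix_input f i j x = f (x[i - 1 := j])"

end

theory Submission
  imports Defs
begin

(* Replace the leader L by a fresh leader L' and the i-th input X_i by a fresh species X' that
   no reaction touches, and add the single reaction L' \<rightarrow> L + j X_i.  Firing that reaction
   in advance and forgetting X' maps every reachable configuration of the new network to one
   reachable in the old network from the input with x_i replaced by j.  Once L' is consumed the
   new network runs exactly the old reactions, so the old stable outputs are the new ones; the
   new reaction does not consume Y, so output-obliviousness is preserved. *)

definition inert :: "crn \<Rightarrow> species \<Rightarrow> bool" where
  "inert C s \<longleftrightarrow> (\<forall>r\<in>reactions C. fst r s = 0 \<and> snd r s = 0)"

lemma step_inert: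
  assumes "inert C s" and "step C A B"
  shows "B s = A s" and "step C (A(s := v)) (B(s := v))"
proof -
  from assms(2) obtain r where r: "r \<in> reactions C" "fst r \<le> A"
    and B: "B = (\<lambda>t. A t - fst r t + snd r t)" unfolding step_def by blast
  have "fst r s = 0" "snd r s = 0" using assms(1) r(1) unfolding inert_def by auto
  then have "fst r \<le> A(s := v)" and "B(s := v) = (\<lambda>t. (A(s := v)) t - fst r t + snd r t)"
    using r(2) B by (auto simp: le_fun_def fun_eq_iff)
  then show "step C (A(s := v)) (B(s := v))" using r(1) unfolding step_def by blast
  show "B s = A s" using B \<open>fst r s = 0\<close> \<open>snd r s = 0\<close> by simp
qed

lemma reaches_inert:
  assumes "inert C s" and "reaches C A B"
  shows "B s = A s" and "reaches C (A(s := v)) (B(s := v))"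
proof -
  have "B s = A s \<and> reaches C (A(s := v)) (B(s := v))"
    using assms(2) unfolding reaches_def
  proof (induction rule: rtranclp_induct)
    case (step B B')
    then show ?case
      using step_inert[OF assms(1) step.hyps(2)] by (metis rtranclp.rtrancl_into_rtrancl)
  qed simp
  then show "B s = A s" and "reaches C (A(s := v)) (B(s := v))" by auto
qed

lemma step_add:
  assumes "step C A B"
  shows "step C (\<lambda>s. A s + D s) (\<lambda>s. B s + D s)"
proof -
  from assms obtain r where r: "r \<in> reactions C" "fst r \<le> A"
    and B: "B = (\<lambda>t. A t - fst r t + snd r t)" unfolding step_def by blast
  have le: "fst r t \<le> A t" for t using r(2) by (simp add: le_fun_def)
  then have "fst r \<le> (\<lambda>s. A s + D s)" by (simp add: le_fun_def trans_le_add1)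
  moreover have "(\<lambda>s. B s + D s) = (\<lambda>t. A t + D t - fst r t + snd r t)"
  proof
    fix t
    show "B t + D t = A t + D t - fst r t + snd r t" using le[of t] B by simp
  qed
  ultimately show ?thesis using r(1) unfolding step_def by blast
qed

lemma reaches_mono:
  assumes "reactions C \<subseteq> reactions C'" and "reaches C A B"
  shows "reaches C' A B"
proof -
  have "step C \<le> step C'" using assms(1) unfolding step_def by blast
  then show ?thesis using assms(2) unfolding reaches_def by (metis rtranclp_mono predicate2D)
qed

lemma stable_fun_upd_inert:
  assumes "inert C s" and "s \<noteq> out_species C" and "stable C Z"
  shows "stable C (Z(s := v))"
  unfolding stable_def
proof (intro allI impI)
  fix B assume "reaches C (Z(s := v)) B"
  then have "reaches C Z (B(s := Z s))"
    using reaches_inert(2)[OF assms(1), of _ _ "Z s"] by fastforce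
  then show "B (out_species C) = (Z(s := v)) (out_species C)"
    using assms(2,3) unfolding stable_def by fastforce
qed

lemma reaches_without_trigger:
  assumes "\<forall>r\<in>reactions C'. r \<in> reactions C \<or> 0 < fst r s" and "inert C s"
    and "reaches C' A B" and "A s = 0"
  shows "reaches C A B"
proof -
  have "reaches C A B \<and> B s = 0"
    using assms(3) unfolding reaches_def
  proof (induction rule: rtranclp_induct)
    case base
    then show ?case using assms(4) by simp
  next
    case (step B B')
    from step.hyps(2) obtain r where r: "r \<in> reactions C'" "fst r \<le> B"
      and B': "B' = (\<lambda>t. B t - fst r t + snd r t)" unfolding step_def by blast
    have "r \<in> reactions C"
      using assms(1) r step.IH by (auto simp: le_fun_def dest!: spec[of _ s])
    then have "step C B B'" using r(2) B' unfolding step_def by blast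
    then show ?case using step.IH step_inert(1)[OF assms(2) \<open>step C B B'\<close>] by auto
  qed
  then show ?thesis by simp
qed

definition input_count :: "species list \<Rightarrow> nat list \<Rightarrow> config" where
  "input_count ins x = (\<lambda>s. \<Sum>i<length x. if ins ! i = s then x ! i else 0)"

lemma init_config_input_count:
  "init_config C x s = input_count (inputs C) x s + (if s = leader_sp C then 1 else 0)"
  unfolding init_config_def input_count_def by simp

lemma input_count_notin:
  assumes "length x \<le> length ins" and "s \<notin> set ins"
  shows "input_count ins x s = 0"
  using assms unfolding input_count_def by (auto intro!: sum.neutral)

lemma input_count_update:
  assumes "k < length x" and "k < length ins"
  shows "input_count (ins[k := u]) (x[k := a]) s + (if ins ! k = s then b else 0)
       = input_count ins (x[k := b]) s + (if u = s then a else 0)"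
proof -
  have k: "k \<in> {..<length x}" using assms(1) by simp
  have rest: "(\<Sum>i\<in>{..<length x} - {k}. if ins[k := u] ! i = s then x[k := a] ! i else 0)
      = (\<Sum>i\<in>{..<length x} - {k}. if ins ! i = s then x[k := b] ! i else 0)"
    by (rule sum.cong) auto
  show ?thesis
    unfolding input_count_def
    using assms rest by (simp add: sum.remove[OF finite_lessThan k])
qed

locale fixed_input_crn =
  fixes C :: crn and d k j :: nat
  assumes wf: "well_formed C d" and k_less: "k < d"
begin

definition new_leader :: species where "new_leader = Suc (Max (species C))"
definition new_input :: species where "new_input = Suc new_leader"

definition leader_reaction :: reaction where
  "leader_reaction = ((\<lambda>s. if s = new_leader then 1 else 0),
     (\<lambda>s. (if s = leader_sp C then 1 else 0) + (if s = inputs C ! k then j else 0)))"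

definition restricted_crn :: crn where
  "restricted_crn = C\<lparr>species := species C \<union> {new_leader, new_input},
     reactions := insert leader_reaction (reactions C),
     inputs := (inputs C)[k := new_input], leader_sp := new_leader\<rparr>"

lemma new_species_fresh: "new_leader \<notin> species C" "new_input \<notin> species C"
  "new_leader \<noteq> new_input"
proof -
  have "finite (species C)" using wf unfolding well_formed_def by simp
  then have "\<And>s. s \<in> species C \<Longrightarrow> s < new_leader"
    unfolding new_leader_def by (simp add: le_imp_less_Suc)
  then show "new_leader \<notin> species C" "new_input \<notin> species C" "new_leader \<noteq> new_input"
    unfolding new_input_def by force+
qed

lemma inputs_length: "length (inputs C) = d"
  using wf unfolding well_formed_def by simp

lemma old_species: "set (inputs C) \<subseteq> species C" "leader_sp C \<in> species C"
  "inputs C ! k \<in> species C"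
  using wf k_less unfolding well_formed_def by auto

lemma old_new_distinct:
  "inputs C ! k \<noteq> new_input" "inputs C ! k \<noteq> new_leader"
  "leader_sp C \<noteq> new_input" "leader_sp C \<noteq> new_leader"
  using old_species(2,3) new_species_fresh(1,2) by metis+

lemma new_species_inert: "inert C new_leader" "inert C new_input"
  using wf new_species_fresh unfolding well_formed_def inert_def by auto

lemma restricted_well_formed: "well_formed restricted_crn d"
proof -
  have "set ((inputs C)[k := new_input]) \<subseteq> insert new_input (set (inputs C))"
    by (rule set_update_subset_insert)
  moreover have "distinct ((inputs C)[k := new_input])"
    using wf new_species_fresh old_species unfolding well_formed_def
    by (auto intro!: distinct_list_update)
  ultimately show ?thesis
    using wf new_species_fresh old_species
    unfolding well_formed_def restricted_crn_def leader_reaction_def by auto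
qed

lemma restricted_output_oblivious:
  "output_oblivious C \<Longrightarrow> output_oblivious restricted_crn"
  using wf new_species_fresh
  unfolding output_oblivious_def restricted_crn_def leader_reaction_def well_formed_def by auto

definition release :: "config \<Rightarrow> config" where
  "release A = (\<lambda>s. (A(new_input := 0, new_leader := 0)) s
                    + A new_leader * snd leader_reaction s)"

definition simulates :: "nat list \<Rightarrow> config \<Rightarrow> bool" where
  "simulates x A \<longleftrightarrow> A new_input = x ! k \<and> A new_leader \<le> 1 \<and>
     reaches C (init_config C (x[k := j])) (release A)"

lemma release_no_leader: "A new_leader = 0 \<Longrightarrow> release A = A(new_input := 0)"
  unfolding release_def by auto

lemma release_step:
  assumes "step C A B"
  shows "step C (release A) (release B)"
proof -
  have "step C (A(new_input := 0, new_leader := 0)) (B(new_input := 0, new_leader := 0))"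
    using assms by (intro step_inert(2) new_species_inert)
  moreover have "B new_leader = A new_leader"
    using assms by (rule step_inert(1)[OF new_species_inert(1)])
  ultimately show ?thesis unfolding release_def by (metis step_add)
qed

lemma release_fire_leader:
  assumes "fst leader_reaction \<le> A"
  shows "release (\<lambda>s. A s - fst leader_reaction s + snd leader_reaction s) = release A"
proof -
  have "1 \<le> A new_leader"
    using assms by (auto simp: le_fun_def leader_reaction_def dest!: spec[of _ new_leader])
  then obtain n where "A new_leader = Suc n" by (metis Suc_le_D One_nat_def)
  then show ?thesis
    using new_species_fresh old_species
    unfolding release_def leader_reaction_def by (auto simp: fun_eq_iff)
qed

lemma step_restricted_crn:
  "step restricted_crn A B \<longleftrightarrow> step C A B \<or>
     (fst leader_reaction \<le> A \<and> B = (\<lambda>s. A s - fst leader_reaction s + snd leader_reaction s))"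
  unfolding step_def restricted_crn_def by auto

lemma simulates_step:
  assumes "simulates x A" and "step restricted_crn A B"
  shows "simulates x B"
  using assms(2) unfolding step_restricted_crn
proof
  assume "step C A B"
  then show ?thesis
    using assms(1) release_step step_inert(1)[OF new_species_inert(1)]
      step_inert(1)[OF new_species_inert(2)]
    unfolding simulates_def reaches_def by (metis rtranclp.rtrancl_into_rtrancl)
next
  assume fire: "fst leader_reaction \<le> A \<and>
    B = (\<lambda>s. A s - fst leader_reaction s + snd leader_reaction s)"
  then have "B new_input = A new_input" "B new_leader \<le> A new_leader"
    using new_species_fresh old_species unfolding leader_reaction_def by auto
  then show ?thesis
    using assms(1) release_fire_leader fire unfolding simulates_def by auto
qed

lemma simulates_reaches:
  assumes "reaches restricted_crn A B" and "simulates x A"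
  shows "simulates x B"
  using assms unfolding reaches_def
  by (induction rule: rtranclp_induct) (auto intro: simulates_step)

lemma simulates_init:
  assumes "length x = d"
  shows "simulates x (init_config restricted_crn x)"
proof -
  let ?I = "init_config restricted_crn x" and ?ins = "inputs C"
  have I: "?I s = input_count (?ins[k := new_input]) x s + (if s = new_leader then 1 else 0)"
    for s unfolding init_config_input_count restricted_crn_def by simp
  have J: "init_config C (x[k := j]) s
      = input_count ?ins (x[k := j]) s + (if s = leader_sp C then 1 else 0)" for s
    by (rule init_config_input_count)
  have update: "input_count (?ins[k := new_input]) x s + (if ?ins ! k = s then j else 0)
      = input_count ?ins (x[k := j]) s + (if new_input = s then x ! k else 0)" for s
    using input_count_update[of k x ?ins new_input "x ! k" s j] assms k_less inputs_length
    by simp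
  have absent: "input_count ?ins (x[k := j]) s = 0" if "s \<notin> species C" for s
    using assms inputs_length old_species that by (intro input_count_notin) auto
  have "input_count (?ins[k := new_input]) x new_leader = 0"
  proof (rule input_count_notin)
    show "length x \<le> length (?ins[k := new_input])" using assms inputs_length by simp
    show "new_leader \<notin> set (?ins[k := new_input])"
      using set_update_subset_insert old_species new_species_fresh by fastforce
  qed
  then have leader: "?I new_leader = 1" by (simp add: I)
  moreover have "?I new_input = x ! k"
    using old_new_distinct new_species_fresh absent[of new_input] update[of new_input]
    by (simp add: I)
  moreover have "release ?I = init_config C (x[k := j])"
  proof
    fix s
    show "release ?I s = init_config C (x[k := j]) s"
    proof (cases "s = new_input \<or> s = new_leader")
      case True
      then show ?thesis
        using old_new_distinct new_species_fresh absent[of s]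
        by (auto simp: release_def leader_reaction_def J)
    next
      case False
      then show ?thesis
        using leader update[of s] by (auto simp: release_def leader_reaction_def J I)
    qed
  qed
  ultimately show ?thesis unfolding simulates_def reaches_def by simp
qed

lemma consume_leader:
  assumes "simulates x A"
  obtains B where "reaches restricted_crn A B" "simulates x B" "B new_leader = 0"
proof (cases "A new_leader = 0")
  case True
  then show ?thesis using that assms unfolding reaches_def by blast
next
  case False
  define B where "B = (\<lambda>s. A s - fst leader_reaction s + snd leader_reaction s)"
  have "fst leader_reaction \<le> A"
    using False unfolding leader_reaction_def by (auto simp: le_fun_def)
  then have "step restricted_crn A B" unfolding step_restricted_crn B_def by blast
  moreover have "B new_leader = 0"
    using False assms new_species_fresh old_species
    unfolding B_def leader_reaction_def simulates_def by auto
  ultimately show ?thesis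
    using that simulates_step[OF assms] unfolding reaches_def by blast
qed

lemma reaches_restricted_no_leader:
  assumes "reaches restricted_crn A B" and "A new_leader = 0"
  shows "reaches C A B"
proof (rule reaches_without_trigger[OF _ new_species_inert(1) assms])
  show "\<forall>r\<in>reactions restricted_crn. r \<in> reactions C \<or> 0 < fst r new_leader"
    by (simp add: restricted_crn_def leader_reaction_def)
qed

lemma stable_restricted:
  assumes "stable C Z" and "Z new_leader = 0"
  shows "stable restricted_crn Z"
  using assms reaches_restricted_no_leader
  unfolding stable_def by (simp add: restricted_crn_def)

lemma stabilize_without_leader:
  assumes "stably_computes C d f" and "length x = d"
    and "simulates x B" and "B new_leader = 0"
  obtains Z where "reaches restricted_crn B Z" "stable restricted_crn Z"
    "Z (out_species restricted_crn) = f (x[k := j])"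
proof -
  have "reaches C (init_config C (x[k := j])) (B(new_input := 0))"
    using assms(3,4) unfolding simulates_def by (simp add: release_no_leader)
  then obtain Z where Z: "reaches C (B(new_input := 0)) Z" "stable C Z"
      "Z (out_species C) = f (x[k := j])"
    using assms(1,2) unfolding stably_computes_def by (metis length_list_update)
  define Z' where "Z' = Z(new_input := x ! k)"
  have "B(new_input := x ! k) = B" using assms(3) unfolding simulates_def by auto
  then have "reaches C B Z'"
    using reaches_inert(2)[OF new_species_inert(2) Z(1), of "x ! k"] unfolding Z'_def by simp
  then have "reaches restricted_crn B Z'"
    by (rule reaches_mono[rotated]) (auto simp: restricted_crn_def)
  moreover have out: "out_species restricted_crn = out_species C" "new_input \<noteq> out_species C"
    using wf new_species_fresh unfolding restricted_crn_def well_formed_def by auto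
  moreover have "Z' new_leader = 0"
    using reaches_inert(1)[OF new_species_inert(1) Z(1)] assms(4) new_species_fresh
    unfolding Z'_def by simp
  then have "stable restricted_crn Z'"
    using stable_fun_upd_inert[OF new_species_inert(2) out(2) Z(2)]
    by (intro stable_restricted) (simp_all add: Z'_def)
  ultimately show ?thesis using that Z(3) unfolding Z'_def by simp
qed

lemma restricted_stably_computes:
  assumes "stably_computes C d f"
  shows "stably_computes restricted_crn d (fix_input f (Suc k) j)"
  unfolding stably_computes_def
proof (intro conjI allI impI restricted_well_formed)
  fix x A assume x: "length x = d" and A: "reaches restricted_crn (init_config restricted_crn x) A"
  obtain B where B: "reaches restricted_crn A B" "simulates x B" "B new_leader = 0"
    using consume_leader simulates_reaches[OF A simulates_init[OF x]] by blast
  obtain Z where Z: "reaches restricted_crn B Z" "stable restricted_crn Z"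
      "Z (out_species restricted_crn) = f (x[k := j])"
    using stabilize_without_leader[OF assms x B(2,3)] by blast
  have "reaches restricted_crn A Z" using B(1) Z(1) unfolding reaches_def by simp
  then show "\<exists>Z. reaches restricted_crn A Z \<and> stable restricted_crn Z \<and>
      Z (out_species restricted_crn) = fix_input f (Suc k) j x"
    using Z(2,3) unfolding fix_input_def by auto
qed

end

theorem mainTheorem12:
  fixes f :: "nat list \<Rightarrow> nat" and d i j :: nat
  assumes "obliviously_computable d f"
    and "i \<in> {1..d}"
  shows "obliviously_computable d (fix_input f i j)"
proof -
  obtain C where C: "stably_computes C d f" "output_oblivious C"
    using assms(1) unfolding obliviously_computable_def by auto
  interpret fixed_input_crn C d "i - 1" j
    using C(1) assms(2) by unfold_locales (auto simp: stably_computes_def)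
  have "Suc (i - 1) = i" using assms(2) by simp
  then show ?thesis
    using restricted_stably_computes[OF C(1)] restricted_output_oblivious[OF C(2)]
    unfolding obliviously_computable_def by metis
qed

end
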